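(* Let $0<t\leq 1$. For all $P,Q\in\mathbf{R}^3$ with $d_E(P,Q)<2t$, one has $\rho_t(P,Q)=d_E(P,Q)$.
   Context: $d_E$ denotes the Euclidean metric on $\mathbf{R}^3$. Fix $0<t\leq 1$ and let $\alpha=\sin^{-1}\!\left(\frac{\sqrt{2-t^2}-t}{2}\right)$. For $X,Y\in\mathbf{R}^3$ with $d_E(X,Y)\leq 2$, choose a sphere of radius $1$ with center $C$ containing $X$ and $Y$, let $X'=2C-X$, and define $$d_t(X,Y)=\begin{cases} d_E(X,Y) & \text{if } \angle XCY\leq \pi-2\alpha,\\ 2t+d_E(X',Y) & \text{if } \angle XCY>\pi-2\alpha,\end{cases}$$ which depends only on $s=d_E(X,Y)$ (since $\angle XCY=2\sin^{-1}(s/2)$ and $d_E(X',Y)=\sqrt{4-s^2}$). For $P,Q\in\mathbf{R}^3$ let $\Gamma_{P,Q}$ be the set of finite sequences $(X_0,\dots,X_n)$, $n\in\mathbf{N}$, in $\mathbf{R}^3$ with $X_0=P$, $X_n=Q$, $d_E(X_{i-1},X_i)\leq 2$ for $1\leq i\leq n$, and $$\rho_t(P,Q)=\inf_{(X_0,\dots,X_n)\in\Gamma_{P,Q}}\sum_{i=1}^n d_t(X_{i-1},X_i).$$ *)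

theory Defs
  imports "HOL-Analysis.Analysis"
begin

definition alpha_t :: "real \<Rightarrow> real" where
  "alpha_t t = arcsin ((sqrt (2 - t\<^sup>2) - t) / 2)"

text \<open>d_t(X,Y) as a function of s = d_E(X,Y) in [0,2]:
  angle XCY = 2 arcsin(s/2), and d_E(X',Y) = sqrt(4 - s^2).\<close>
definition d_t_of :: "real \<Rightarrow> real \<Rightarrow> real" where
  "d_t_of t s = (if 2 * arcsin (s / 2) \<le> pi - 2 * alpha_t t then s
                 else 2 * t + sqrt (4 - s\<^sup>2))"

definition d_t :: "real \<Rightarrow> real^3 \<Rightarrow> real^3 \<Rightarrow> real" where
  "d_t t X Y = d_t_of t (dist X Y)"

text \<open>Admissible chains from P to Q: sequences X_0..X_n (n in N, n = 0 allowed)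
  given as a function on {0..n}, with consecutive Euclidean distance at most 2.\<close>
definition chains :: "real^3 \<Rightarrow> real^3 \<Rightarrow> (nat \<times> (nat \<Rightarrow> real^3)) set" where
  "chains P Q = {(n, X). X 0 = P \<and> X n = Q \<and> (\<forall>i\<in>{1..n}. dist (X (i - 1)) (X i) \<le> 2)}"

definition rho_t :: "real \<Rightarrow> real^3 \<Rightarrow> real^3 \<Rightarrow> real" where
  "rho_t t P Q = Inf ((\<lambda>(n, X). \<Sum>i=1..n. d_t t (X (i - 1)) (X i)) ` chains P Q)"

end

theory Submission
  imports Defs
begin

text \<open>With \<open>a = (sqrt (2 - t\<^sup>2) - t) / 2\<close> and \<open>b = (sqrt (2 - t\<^sup>2) + t) / 2\<close> one has
  \<open>a\<^sup>2 + b\<^sup>2 = 1\<close>, hence \<open>\<pi> - 2 \<alpha> = 2 arcsin b\<close>: a step of Euclidean length \<open>s \<le> 2 b\<close>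
  costs exactly \<open>s\<close>, and \<open>2 b \<ge> 2 t\<close>; every other step costs at least \<open>2 t\<close>.
  So when \<open>d_E(P,Q) < 2 t\<close>, a chain either contains a step costing more than \<open>d_E(P,Q)\<close>, or
  costs its Euclidean length, which is at least \<open>d_E(P,Q)\<close> by the triangle inequality;
  the one-step chain attains \<open>d_E(P,Q)\<close>.\<close>

lemma sqrt_two_minus_square_add_le:
  fixes t :: real
  assumes "t\<^sup>2 \<le> 2"
  shows "sqrt (2 - t\<^sup>2) + t \<le> 2"
proof -
  define r where "r = sqrt (2 - t\<^sup>2)"
  have "r\<^sup>2 = 2 - t\<^sup>2" "0 \<le> r" using assms by (auto simp: r_def)
  moreover have "0 \<le> (r - t)\<^sup>2" by simp
  ultimately have "(r + t)\<^sup>2 \<le> 2\<^sup>2" by (simp add: power2_eq_square algebra_simps)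
  then show ?thesis unfolding r_def[symmetric] by (rule power2_le_imp_le) simp
qed

lemma pi_minus_two_alpha_t:
  assumes "\<bar>t\<bar> \<le> 1"
  shows "pi - 2 * alpha_t t = 2 * arcsin ((sqrt (2 - t\<^sup>2) + t) / 2)"
proof -
  define r where "r = sqrt (2 - t\<^sup>2)"
  define a where "a = (r - t) / 2"
  define b where "b = (r + t) / 2"
  have t2: "t\<^sup>2 \<le> 1" using power_mono[OF assms, of 2] by simp
  have r2: "r\<^sup>2 = 2 - t\<^sup>2" and r0: "0 \<le> r" using t2 by (auto simp: r_def)
  have "\<bar>t\<bar> \<le> r"
    unfolding r_def real_sqrt_abs[symmetric] using t2 by (intro real_sqrt_le_mono) linarith
  then have a0: "0 \<le> a" and b0: "0 \<le> b" by (auto simp: a_def b_def)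
  have a1: "a \<le> 1" using sqrt_two_minus_square_add_le[of "-t"] t2 by (simp add: a_def r_def)
  have "a\<^sup>2 + b\<^sup>2 = 1"
    using r2 by (simp add: a_def b_def power2_eq_square field_simps)
  then have "sqrt (1 - a\<^sup>2) = b" using b0 by (simp add: real_sqrt_unique)
  then have "arccos a = arcsin b" using a0 a1 by (simp add: arccos_arcsin_sqrt_pos)
  moreover have "arcsin a = pi / 2 - arccos a" using a0 a1 by (simp add: arcsin_arccos_eq)
  ultimately show ?thesis by (simp add: alpha_t_def a_def b_def r_def)
qed

lemma d_t_of_eq_self:
  assumes "\<bar>t\<bar> \<le> 1" and "0 \<le> s" and "s \<le> sqrt (2 - t\<^sup>2) + t"
  shows "d_t_of t s = s"
proof -
  have "t\<^sup>2 \<le> 2" using power_mono[OF assms(1), of 2] by simp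
  then have "sqrt (2 - t\<^sup>2) + t \<le> 2" by (rule sqrt_two_minus_square_add_le)
  then have "arcsin (s / 2) \<le> arcsin ((sqrt (2 - t\<^sup>2) + t) / 2)"
    using assms by (intro arcsin_le_mono[THEN iffD2]) auto
  then show ?thesis using pi_minus_two_alpha_t[OF assms(1)] by (simp add: d_t_of_def)
qed

lemma d_t_of_eq_self_if_le_two_t:
  assumes "0 \<le> t" and "t \<le> 1" and "0 \<le> s" and "s \<le> 2 * t"
  shows "d_t_of t s = s"
proof (rule d_t_of_eq_self)
  have "t\<^sup>2 \<le> 1" using assms by (simp add: power_le_one)
  then have "t \<le> sqrt (2 - t\<^sup>2)" using assms(1) by (intro real_le_rsqrt) linarith
  then show "s \<le> sqrt (2 - t\<^sup>2) + t" using assms by linarith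
qed (use assms in auto)

lemma d_t_of_eq_self_or_ge:
  assumes "\<bar>s\<bar> \<le> 2"
  shows "d_t_of t s = s \<or> 2 * t \<le> d_t_of t s"
proof -
  have "s\<^sup>2 \<le> 2\<^sup>2" using power_mono[OF assms, of 2] by simp
  then show ?thesis by (auto simp: d_t_of_def)
qed

lemma dist_le_sum_dist_chain:
  fixes X :: "nat \<Rightarrow> 'a::metric_space"
  shows "dist (X 0) (X n) \<le> (\<Sum>i=1..n. dist (X (i - 1)) (X i))"
proof (induction n)
  case 0
  then show ?case by simp
next
  case (Suc n)
  have "dist (X 0) (X (Suc n)) \<le> dist (X 0) (X n) + dist (X n) (X (Suc n))"
    by (rule dist_triangle)
  also have "\<dots> \<le> (\<Sum>i=1..Suc n. dist (X (i - 1)) (X i))"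
    using Suc by simp
  finally show ?case .
qed

lemma dist_le_sum_chain_cost:
  fixes X :: "nat \<Rightarrow> 'a::metric_space"
  assumes "\<And>i. i \<in> {1..n} \<Longrightarrow> c i = dist (X (i - 1)) (X i) \<or> dist (X 0) (X n) \<le> c i"
  shows "dist (X 0) (X n) \<le> (\<Sum>i=1..n. c i)"
proof (cases "\<exists>j\<in>{1..n}. dist (X 0) (X n) \<le> c j")
  case True
  then obtain j where "j \<in> {1..n}" and "dist (X 0) (X n) \<le> c j" by blast
  moreover have "c j \<le> (\<Sum>i=1..n. c i)"
  proof (rule member_le_sum)
    show "0 \<le> c i" if "i \<in> {1..n} - {j}" for i
      using assms[of i] that zero_le_dist[of "X 0" "X n"] by force
  qed (use \<open>j \<in> {1..n}\<close> in auto)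
  ultimately show ?thesis by linarith
next
  case False
  then have "(\<Sum>i=1..n. c i) = (\<Sum>i=1..n. dist (X (i - 1)) (X i))"
    using assms by (intro sum.cong) auto
  then show ?thesis using dist_le_sum_dist_chain[of X n] by simp
qed

lemma dist_le_d_t_chain_cost:
  assumes "(n, X) \<in> chains P Q" and "dist P Q \<le> 2 * t"
  shows "dist P Q \<le> (\<Sum>i=1..n. d_t t (X (i - 1)) (X i))"
proof -
  have ends: "X 0 = P" "X n = Q"
    and step: "\<And>i. i \<in> {1..n} \<Longrightarrow> dist (X (i - 1)) (X i) \<le> 2"
    using assms(1) by (auto simp: chains_def)
  have "dist (X 0) (X n) \<le> (\<Sum>i=1..n. d_t_of t (dist (X (i - 1)) (X i)))"
  proof (rule dist_le_sum_chain_cost)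
    fix i assume "i \<in> {1..n}"
    then show "d_t_of t (dist (X (i - 1)) (X i)) = dist (X (i - 1)) (X i)
        \<or> dist (X 0) (X n) \<le> d_t_of t (dist (X (i - 1)) (X i))"
      using d_t_of_eq_self_or_ge[of "dist (X (i - 1)) (X i)" t] step assms(2) ends by auto
  qed
  then show ?thesis using ends by (simp add: d_t_def)
qed

theorem corollary3:
  fixes t :: real and P Q :: "real^3"
  assumes "0 < t" and "t \<le> 1"
    and "dist P Q < 2 * t"
  shows "rho_t t P Q = dist P Q"
  unfolding rho_t_def
proof (rule cInf_eq_minimum)
  have "(1, \<lambda>i. if i = 0 then P else Q) \<in> chains P Q"
    using assms by (simp add: chains_def)
  moreover have "d_t t P Q = dist P Q"
    unfolding d_t_def using assms by (intro d_t_of_eq_self_if_le_two_t) auto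
  ultimately show "dist P Q \<in> (\<lambda>(n, X). \<Sum>i=1..n. d_t t (X (i - 1)) (X i)) ` chains P Q"
    by (intro image_eqI) auto
next
  fix x
  assume "x \<in> (\<lambda>(n, X). \<Sum>i=1..n. d_t t (X (i - 1)) (X i)) ` chains P Q"
  then show "dist P Q \<le> x"
    using dist_le_d_t_chain_cost assms(3) by fastforce
qed

end
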